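(* Let $X$ be a Tychonoff space and let $G(X)$ denote either $F(X)$ or $A(X)$. Then $G(X)$ has countable fan-tightness if and only if $X$ is discrete. *)

theory Defs
  imports "HOL-Analysis.Analysis" "HOL-Algebra.Free_Abelian_Groups"
begin

definition group_topology :: "('g, 'b) monoid_scheme \<Rightarrow> 'g topology \<Rightarrow> bool" where
  "group_topology G T \<longleftrightarrow>
     topspace T = carrier G \<and>
     continuous_map (prod_topology T T) T (\<lambda>(x, y). x \<otimes>\<^bsub>G\<^esub> y) \<and>
     continuous_map T T (\<lambda>x. inv\<^bsub>G\<^esub> x)"

text \<open>Markov topology: the finest group topology on G for which the map \<open>\<iota>\<close> from X
is continuous (the supremum of all such group topologies).\<close>
definition markov_topology ::
    "('g, 'b) monoid_scheme \<Rightarrow> ('a \<Rightarrow> 'g) \<Rightarrow> 'a topology \<Rightarrow> 'g topology" where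
  "markov_topology G \<iota> X =
     topology_generated_by
       (\<Union>{{U. openin T U} | T. group_topology G T \<and> continuous_map X T \<iota>})"

text \<open>A letter (a, True) stands for a, (a, False) for a inverse.\<close>
fun fg_reduce :: "('a \<times> bool) list \<Rightarrow> ('a \<times> bool) list" where
  "fg_reduce [] = []"
| "fg_reduce (x # xs) =
     (case fg_reduce xs of
        [] \<Rightarrow> [x]
      | y # ys \<Rightarrow> (if fst x = fst y \<and> snd x \<noteq> snd y then ys else x # y # ys))"

definition free_group :: "'a set \<Rightarrow> ('a \<times> bool) list monoid" where
  "free_group S = \<lparr>carrier = {w. fst ` set w \<subseteq> S \<and> fg_reduce w = w},
                   monoid.mult = (\<lambda>v w. fg_reduce (v @ w)), one = []\<rparr>"

definition fg_insert :: "'a \<Rightarrow> ('a \<times> bool) list" where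
  "fg_insert x = [(x, True)]"

definition F_top :: "'a topology \<Rightarrow> ('a \<times> bool) list topology" where
  "F_top X = markov_topology (free_group (topspace X)) fg_insert X"

definition fa_insert :: "'a \<Rightarrow> ('a \<Rightarrow>\<^sub>0 int)" where
  "fa_insert x = Poly_Mapping.single x 1"

definition A_top :: "'a topology \<Rightarrow> ('a \<Rightarrow>\<^sub>0 int) topology" where
  "A_top X = markov_topology (free_Abelian_group (topspace X)) fa_insert X"

definition tychonoff_space :: "'a topology \<Rightarrow> bool" where
  "tychonoff_space X \<longleftrightarrow> completely_regular_space X \<and> t1_space X"

definition countable_fan_tightness :: "'a topology \<Rightarrow> bool" where
  "countable_fan_tightness T \<longleftrightarrow>
     (\<forall>x A. x \<in> topspace T \<and> (\<forall>n::nat. A n \<subseteq> topspace T \<and> x \<in> T closure_of A n) \<longrightarrow>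
        (\<exists>B. (\<forall>n. finite (B n) \<and> B n \<subseteq> A n) \<and> x \<in> T closure_of (\<Union>n. B n)))"

end

theory Submission
  imports Defs
begin

text \<open>Both \<open>F(X)\<close> and \<open>A(X)\<close> carry Markov topologies on groups in which every map
\<open>X \<rightarrow> \<real>\<close> extends to a homomorphism into \<open>(\<real>, +)\<close>, and the argument uses nothing else.
If \<open>X\<close> is discrete, so is the Markov topology, and discrete spaces have countable fan-tightness.
Conversely, let \<open>p\<close> be a non-isolated point and \<open>h\<^sub>n(y) = (y p\<^sup>-\<^sup>1)^(2^(n+1))\<close>. Each \<open>h\<^sub>n\<close> is
continuous with \<open>h\<^sub>n(p) = 1\<close>, so \<open>1\<close> lies in the closure of \<open>A\<^sub>n = h\<^sub>n(X - {p})\<close>. Given finite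
\<open>B\<^sub>n = h\<^sub>n(F\<^sub>n) \<subseteq> A\<^sub>n\<close>, complete regularity yields a continuous \<open>f\<close> with \<open>f(p) = 0\<close> and
\<open>f \<ge> 2^-(n+1)\<close> on \<open>F\<^sub>n\<close> (a series of Urysohn functions). Its extension \<open>\<phi>\<close> is continuous for the
Markov topology, because pulling back the topology of \<open>\<real>\<close> along \<open>\<phi>\<close> gives an admissible group
topology; but \<open>\<phi> \<ge> 1\<close> on every \<open>B\<^sub>n\<close>, so \<open>{|\<phi>| < 1}\<close> is a neighbourhood of \<open>1\<close> missing
their union.\<close>

section \<open>Reduced words form a group\<close>

lemma length_fg_reduce: "length (fg_reduce w) \<le> length w"
  by (induction w) (auto split: list.splits)

lemma set_fg_reduce: "set (fg_reduce w) \<subseteq> set w"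
  by (induction w) (auto split: list.splits if_splits)

lemma fg_reduce_idem [simp]: "fg_reduce (fg_reduce w) = fg_reduce w"
proof (induction w)
  case Nil then show ?case by simp
next
  case (Cons x xs)
  show ?case
  proof (cases "fg_reduce xs")
    case Nil then show ?thesis by simp
  next
    case (Cons y ys)
    have yys: "fg_reduce (y # ys) = y # ys" using Cons.IH Cons by simp
    show ?thesis
    proof (cases "fst x = fst y \<and> snd x \<noteq> snd y")
      case True
      have "fg_reduce ys = ys"
      proof (cases "fg_reduce ys")
        case Nil then show ?thesis using yys by simp
      next
        case (Cons z zs)
        then show ?thesis using yys length_fg_reduce[of ys] by (auto split: if_splits)
      qed
      then show ?thesis using True Cons by simp
    next
      case False
      then show ?thesis using Cons yys by auto
    qed
  qed
qed

lemma fg_reduce_Cons_reduced: "fg_reduce (x # w) = x # w \<Longrightarrow> fg_reduce w = w"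
proof (cases "fg_reduce w")
  case (Cons y ys)
  assume reduced: "fg_reduce (x # w) = x # w"
  show ?thesis
  proof (cases "fst x = fst y \<and> snd x \<noteq> snd y")
    case True
    then have "ys = x # w" using reduced Cons by simp
    then show ?thesis using length_fg_reduce[of w] Cons by simp
  next
    case False then show ?thesis using reduced Cons by auto
  qed
qed simp

lemma fg_reduce_reduced_no_cancel:
  assumes "fg_reduce (x # u # us) = x # u # us"
  shows "\<not> (fst x = fst u \<and> snd x \<noteq> snd u)"
proof
  assume "fst x = fst u \<and> snd x \<noteq> snd u"
  moreover have "fg_reduce (u # us) = u # us" using fg_reduce_Cons_reduced[OF assms] .
  ultimately have "fg_reduce (x # u # us) = us" by simp
  then show False using assms by simp
qed

lemma fg_reduce_append_reduce_right: "fg_reduce (v @ fg_reduce w) = fg_reduce (v @ w)"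
  by (induction v) simp_all

lemma fg_reduce_cancel_pair:
  assumes c: "fst x = fst y \<and> snd x \<noteq> snd y"
  shows "fg_reduce (x # y # z) = fg_reduce z"
proof (cases "fg_reduce z")
  case Nil then show ?thesis using c by simp
next
  case (Cons u us)
  have reduced: "fg_reduce (u # us) = u # us" using Cons fg_reduce_idem[of z] by simp
  show ?thesis
  proof (cases "fst y = fst u \<and> snd y \<noteq> snd u")
    case True
    then have "u = x" using c by (cases u; cases x; cases y) auto
    have us: "fg_reduce us = us" using fg_reduce_Cons_reduced[OF reduced] .
    have "fg_reduce (x # us) = x # us"
    proof (cases us)
      case (Cons v vs)
      have "\<not> (fst x = fst v \<and> snd x \<noteq> snd v)"
        using fg_reduce_reduced_no_cancel[of u v vs] reduced \<open>u = x\<close> Cons by simp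
      then show ?thesis using us Cons by simp
    qed simp
    then show ?thesis using True Cons \<open>u = x\<close> us by simp
  next
    case False
    then show ?thesis using Cons c by auto
  qed
qed

lemma fg_reduce_append_reduce_left: "fg_reduce (fg_reduce v @ w) = fg_reduce (v @ w)"
proof (induction v)
  case Nil then show ?case by simp
next
  case (Cons x v)
  have "fg_reduce (x # (v @ w)) = fg_reduce (x # fg_reduce (v @ w))" by simp
  also have "\<dots> = fg_reduce (x # fg_reduce (fg_reduce v @ w))" using Cons by simp
  also have "\<dots> = fg_reduce (x # (fg_reduce v @ w))" by simp
  finally have eq: "fg_reduce ((x # v) @ w) = fg_reduce (x # (fg_reduce v @ w))" by simp
  show ?case
  proof (cases "fg_reduce v")
    case Nil then show ?thesis using eq by simp
  next
    case (Cons y ys)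
    show ?thesis
    proof (cases "fst x = fst y \<and> snd x \<noteq> snd y")
      case True
      have "fg_reduce ((x # v) @ w) = fg_reduce (x # y # (ys @ w))" using eq Cons by simp
      also have "\<dots> = fg_reduce (ys @ w)" by (rule fg_reduce_cancel_pair[OF True])
      finally show ?thesis using Cons True by simp
    next
      case False then show ?thesis using eq Cons by auto
    qed
  qed
qed

definition fg_flip :: "('a \<times> bool) list \<Rightarrow> ('a \<times> bool) list" where
  "fg_flip w = map (\<lambda>(a, b). (a, \<not> b)) (rev w)"

lemma fg_flip_flip [simp]: "fg_flip (fg_flip w) = w"
  by (induction w) (auto simp: fg_flip_def)

lemma fst_set_fg_flip: "fst ` set (fg_flip w) = fst ` set w"
  by (force simp: fg_flip_def)

lemma fg_reduce_append_flip: "fg_reduce (w @ fg_flip w) = []"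
proof (induction w)
  case Nil then show ?case by (simp add: fg_flip_def)
next
  case (Cons x w)
  let ?x' = "(fst x, \<not> snd x)"
  have "fg_reduce (w @ fg_flip w @ [?x']) = fg_reduce (fg_reduce (w @ fg_flip w) @ [?x'])"
    using fg_reduce_append_reduce_left[of "w @ fg_flip w" "[?x']"] by simp
  also have "\<dots> = [?x']" using Cons by simp
  finally show ?case by (simp add: fg_flip_def case_prod_beta)
qed

lemma group_free_group: "group (free_group S)"
proof (rule groupI)
  show "x \<otimes>\<^bsub>free_group S\<^esub> y \<in> carrier (free_group S)"
    if "x \<in> carrier (free_group S)" "y \<in> carrier (free_group S)" for x y
    using that set_fg_reduce[of "x @ y"] by (fastforce simp: free_group_def)
  show "\<one>\<^bsub>free_group S\<^esub> \<in> carrier (free_group S)" by (simp add: free_group_def)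
  show "x \<otimes>\<^bsub>free_group S\<^esub> y \<otimes>\<^bsub>free_group S\<^esub> z =
        x \<otimes>\<^bsub>free_group S\<^esub> (y \<otimes>\<^bsub>free_group S\<^esub> z)" for x y z
    by (simp add: free_group_def fg_reduce_append_reduce_left fg_reduce_append_reduce_right)
  show "\<one>\<^bsub>free_group S\<^esub> \<otimes>\<^bsub>free_group S\<^esub> x = x" if "x \<in> carrier (free_group S)" for x
    using that by (simp add: free_group_def)
  show "\<exists>y\<in>carrier (free_group S). y \<otimes>\<^bsub>free_group S\<^esub> x = \<one>\<^bsub>free_group S\<^esub>"
    if "x \<in> carrier (free_group S)" for x
  proof
    show "fg_reduce (fg_flip x) \<otimes>\<^bsub>free_group S\<^esub> x = \<one>\<^bsub>free_group S\<^esub>"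
      using fg_reduce_append_flip[of "fg_flip x"]
      by (simp add: free_group_def fg_reduce_append_reduce_left)
    show "fg_reduce (fg_flip x) \<in> carrier (free_group S)"
      using that set_fg_reduce[of "fg_flip x"] fst_set_fg_flip[of x]
      by (auto simp: free_group_def)
  qed
qed

section \<open>Homomorphisms into the reals\<close>

definition real_hom :: "('g, 'b) monoid_scheme \<Rightarrow> ('g \<Rightarrow> real) \<Rightarrow> bool" where
  "real_hom G \<phi> \<longleftrightarrow> (\<forall>x\<in>carrier G. \<forall>y\<in>carrier G. \<phi> (x \<otimes>\<^bsub>G\<^esub> y) = \<phi> x + \<phi> y)"

context group
begin

lemma real_hom_one: "real_hom G \<phi> \<Longrightarrow> \<phi> \<one> = 0"
  unfolding real_hom_def by (metis add_cancel_right_right l_one one_closed)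

lemma real_hom_inv: "real_hom G \<phi> \<Longrightarrow> x \<in> carrier G \<Longrightarrow> \<phi> (inv x) = - \<phi> x"
  using real_hom_one unfolding real_hom_def by (metis add_eq_0_iff inv_closed r_inv)

lemma real_hom_pow: "real_hom G \<phi> \<Longrightarrow> x \<in> carrier G \<Longrightarrow> \<phi> (x [^] (n::nat)) = real n * \<phi> x"
  by (induction n) (simp_all add: real_hom_one real_hom_def distrib_right)

lemma real_hom_pow_div:
  assumes "real_hom G \<phi>" "x \<in> carrier G" "y \<in> carrier G"
  shows "\<phi> ((x \<otimes> inv y) [^] (n::nat)) = real n * (\<phi> x - \<phi> y)"
  using assms by (simp add: real_hom_pow real_hom_inv) (simp add: real_hom_def real_hom_inv)

end

definition fg_lift :: "('a \<Rightarrow> real) \<Rightarrow> ('a \<times> bool) list \<Rightarrow> real" where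
  "fg_lift f w = sum_list (map (\<lambda>(a, b). if b then f a else - f a) w)"

lemma fg_lift_fg_reduce: "fg_lift f (fg_reduce w) = fg_lift f w"
  by (induction w) (auto simp: fg_lift_def case_prod_beta split: list.splits)

lemma real_hom_fg_lift: "real_hom (free_group S) (fg_lift f)"
  by (simp add: real_hom_def free_group_def fg_lift_fg_reduce) (simp add: fg_lift_def)

lemma fg_lift_fg_insert: "fg_lift f (fg_insert x) = f x"
  by (simp add: fg_lift_def fg_insert_def)

definition fa_lift :: "('a \<Rightarrow> real) \<Rightarrow> ('a \<Rightarrow>\<^sub>0 int) \<Rightarrow> real" where
  "fa_lift f m = (\<Sum>a\<in>Poly_Mapping.keys m. real_of_int (Poly_Mapping.lookup m a) * f a)"

lemma fa_lift_superset:
  assumes "finite K" "Poly_Mapping.keys m \<subseteq> K"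
  shows "fa_lift f m = (\<Sum>a\<in>K. real_of_int (Poly_Mapping.lookup m a) * f a)"
  unfolding fa_lift_def by (rule sum.mono_neutral_left[OF assms]) (auto simp: in_keys_iff)

lemma fa_lift_add: "fa_lift f (x + y) = fa_lift f x + fa_lift f y"
proof -
  define K where "K = Poly_Mapping.keys x \<union> Poly_Mapping.keys y"
  have K: "finite K" "Poly_Mapping.keys (x + y) \<subseteq> K"
    using keys_add[of x y] by (auto simp: K_def)
  show ?thesis
    using fa_lift_superset[OF K, of f] fa_lift_superset[OF K(1), of x f]
      fa_lift_superset[OF K(1), of y f]
    by (simp add: K_def lookup_add distrib_right sum.distrib)
qed

lemma real_hom_fa_lift: "real_hom (free_Abelian_group S) (fa_lift f)"
  by (simp add: real_hom_def fa_lift_add)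

lemma fa_lift_fa_insert: "fa_lift f (fa_insert x) = f x"
  by (simp add: fa_lift_def fa_insert_def)

section \<open>Group topologies and the Markov topology\<close>

lemma group_topology_discrete:
  assumes "group G"
  shows "group_topology G (discrete_topology (carrier G))"
proof -
  interpret group G by (rule assms)
  show ?thesis
    unfolding group_topology_def prod_topology_discrete_topology[symmetric] by (auto simp: Pi_iff)
qed

lemma continuous_map_group_mult:
  assumes "group_topology G T" "continuous_map Y T a" "continuous_map Y T b"
  shows "continuous_map Y T (\<lambda>y. a y \<otimes>\<^bsub>G\<^esub> b y)"
proof -
  have "continuous_map Y T ((\<lambda>(x, y). x \<otimes>\<^bsub>G\<^esub> y) \<circ> (\<lambda>y. (a y, b y)))"
    using assms by (intro continuous_map_compose[where X'="prod_topology T T"] continuous_map_pairedI)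
       (auto simp: group_topology_def)
  then show ?thesis by (simp add: o_def)
qed

lemma continuous_map_group_inv:
  assumes "group_topology G T" "continuous_map Y T a"
  shows "continuous_map Y T (\<lambda>y. inv\<^bsub>G\<^esub> a y)"
proof -
  have "continuous_map Y T ((\<lambda>x. inv\<^bsub>G\<^esub> x) \<circ> a)"
    using assms by (intro continuous_map_compose[where X'=T]) (auto simp: group_topology_def)
  then show ?thesis by (simp add: o_def)
qed

lemma continuous_map_group_pow:
  assumes "group G" "group_topology G T" "continuous_map Y T a"
  shows "continuous_map Y T (\<lambda>y. a y [^]\<^bsub>G\<^esub> (n::nat))"
proof (induction n)
  case 0
  have "\<one>\<^bsub>G\<^esub> \<in> topspace T"
    using assms(1,2) by (simp add: group_topology_def group.is_monoid monoid.one_closed)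
  then show ?case by simp
next
  case (Suc n)
  then show ?case using continuous_map_group_mult[OF assms(2) Suc assms(3)] by simp
qed

lemma group_topology_pullback_real_hom:
  assumes G: "group G" and \<phi>: "real_hom G \<phi>"
  shows "group_topology G (pullback_topology (carrier G) \<phi> euclideanreal)"
proof -
  interpret group G by (rule G)
  define T where "T = pullback_topology (carrier G) \<phi> euclideanreal"
  have ts: "topspace T = carrier G" by (simp add: T_def topspace_pullback_topology)
  have \<phi>_cont: "continuous_map T euclideanreal \<phi>"
    using continuous_map_pullback[OF continuous_map_id, of "carrier G" \<phi>] by (simp add: T_def)
  have "continuous_map (prod_topology T T) euclideanreal (\<phi> \<circ> (\<lambda>(x, y). x \<otimes>\<^bsub>G\<^esub> y))"
  proof (rule continuous_map_eq[where f="\<lambda>z. \<phi> (fst z) + \<phi> (snd z)"])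
    show "continuous_map (prod_topology T T) euclideanreal (\<lambda>z. \<phi> (fst z) + \<phi> (snd z))"
      by (intro continuous_map_add continuous_map_compose[OF continuous_map_fst \<phi>_cont, unfolded o_def]
          continuous_map_compose[OF continuous_map_snd \<phi>_cont, unfolded o_def])
  qed (use \<phi> ts in \<open>auto simp: real_hom_def\<close>)
  then have mult: "continuous_map (prod_topology T T) T (\<lambda>(x, y). x \<otimes>\<^bsub>G\<^esub> y)"
    unfolding T_def by (rule continuous_map_pullback') (auto simp: ts[unfolded T_def])
  have "continuous_map T euclideanreal (\<phi> \<circ> (\<lambda>x. inv\<^bsub>G\<^esub> x))"
    by (rule continuous_map_eq[where f="\<lambda>z. - \<phi> z"])
       (use \<phi>_cont ts real_hom_inv[OF \<phi>] in \<open>auto intro: continuous_intros\<close>)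
  then have inv: "continuous_map T T (\<lambda>x. inv\<^bsub>G\<^esub> x)"
    unfolding T_def by (rule continuous_map_pullback') (auto simp: ts[unfolded T_def])
  show ?thesis
    using ts mult inv by (simp add: group_topology_def T_def)
qed

lemma admissible_pullback_real_hom:
  assumes "group G" "\<iota> ` topspace X \<subseteq> carrier G" "real_hom G \<phi>"
    and "continuous_map X euclideanreal (\<phi> \<circ> \<iota>)"
  shows "group_topology G (pullback_topology (carrier G) \<phi> euclideanreal)"
    and "continuous_map X (pullback_topology (carrier G) \<phi> euclideanreal) \<iota>"
proof -
  show "group_topology G (pullback_topology (carrier G) \<phi> euclideanreal)"
    using assms(1,3) by (rule group_topology_pullback_real_hom)
  show "continuous_map X (pullback_topology (carrier G) \<phi> euclideanreal) \<iota>"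
    using assms(2,4) by (intro continuous_map_pullback') auto
qed

lemma openin_markov_topology:
  assumes "group_topology G T" "continuous_map X T \<iota>" "openin T U"
  shows "openin (markov_topology G \<iota> X) U"
  unfolding markov_topology_def by (rule topology_generated_by_Basis) (use assms in blast)

lemma admissible_topology_exists:
  assumes "group G" "\<iota> ` topspace X \<subseteq> carrier G"
  obtains T where "group_topology G T" "continuous_map X T \<iota>"
proof -
  \<comment> \<open>the pullback along \<open>\<phi> = 0\<close> is the indiscrete topology on \<open>G\<close>\<close>
  have "real_hom G (\<lambda>_. 0)" by (simp add: real_hom_def)
  from admissible_pullback_real_hom[OF assms this] show ?thesis by (rule that) auto
qed

lemma topspace_markov_topology:
  assumes "group G" "\<iota> ` topspace X \<subseteq> carrier G"
  shows "topspace (markov_topology G \<iota> X) = carrier G"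
proof -
  obtain T where T: "group_topology G T" "continuous_map X T \<iota>"
    using admissible_topology_exists[OF assms] .
  show ?thesis
    unfolding markov_topology_def topology_generated_by_topspace
  proof
    show "\<Union> (\<Union> {{U. openin T U} |T. group_topology G T \<and> continuous_map X T \<iota>}) \<subseteq> carrier G"
      by (auto simp: group_topology_def dest: openin_subset)
    show "carrier G \<subseteq> \<Union> (\<Union> {{U. openin T U} |T. group_topology G T \<and> continuous_map X T \<iota>})"
      using T by (auto simp: group_topology_def intro!: exI[of _ "topspace T"])
  qed
qed

lemma continuous_map_into_markov_topology:
  assumes "group G" "\<iota> ` topspace X \<subseteq> carrier G"
    and h: "\<And>T. group_topology G T \<Longrightarrow> continuous_map X T \<iota> \<Longrightarrow> continuous_map Y T h"
  shows "continuous_map Y (markov_topology G \<iota> X) h"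
  unfolding markov_topology_def
proof (rule continuous_on_generated_topo)
  fix U assume "U \<in> \<Union> {{U. openin T U} |T. group_topology G T \<and> continuous_map X T \<iota>}"
  then obtain T where "group_topology G T" "continuous_map X T \<iota>" "openin T U" by blast
  then show "openin Y (h -` U \<inter> topspace Y)"
    using h by (simp add: continuous_map_alt)
next
  obtain T where T: "group_topology G T" "continuous_map X T \<iota>"
    using admissible_topology_exists[OF assms(1,2)] .
  have "h ` topspace Y \<subseteq> topspace T" using h[OF T] by (auto simp: continuous_map_def)
  then show "h ` topspace Y \<subseteq> \<Union> (\<Union> {{U. openin T U} |T. group_topology G T \<and> continuous_map X T \<iota>})"
    using T by blast
qed

lemma continuous_map_markov_topology_real_hom:
  assumes "group G" "\<iota> ` topspace X \<subseteq> carrier G" "real_hom G \<phi>"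
    and "continuous_map X euclideanreal (\<phi> \<circ> \<iota>)"
  shows "continuous_map (markov_topology G \<iota> X) euclideanreal \<phi>"
  unfolding continuous_map_openin_preimage_eq
proof (intro conjI allI impI)
  note T = admissible_pullback_real_hom[OF assms]
  show "\<phi> \<in> topspace (markov_topology G \<iota> X) \<rightarrow> topspace euclideanreal" by simp
  fix U :: "real set" assume "openin euclideanreal U"
  then have "openin (pullback_topology (carrier G) \<phi> euclideanreal) (\<phi> -` U \<inter> carrier G)"
    by (auto simp: openin_pullback_topology)
  then show "openin (markov_topology G \<iota> X) (topspace (markov_topology G \<iota> X) \<inter> \<phi> -` U)"
    using openin_markov_topology[OF T] topspace_markov_topology[OF assms(1,2)]
    by (metis Int_commute)
qed

lemma markov_topology_discrete:
  assumes G: "group G" and \<iota>: "\<iota> ` topspace X \<subseteq> carrier G"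
    and X: "X = discrete_topology (topspace X)"
  shows "markov_topology G \<iota> X = discrete_topology (carrier G)"
proof -
  have "continuous_map X (discrete_topology (carrier G)) \<iota>"
    using \<iota> by (subst X) (auto simp: Pi_iff)
  then have "openin (markov_topology G \<iota> X) {x}" if "x \<in> carrier G" for x
    using that by (intro openin_markov_topology[OF group_topology_discrete[OF G]]) auto
  then have "discrete_topology (carrier G) = markov_topology G \<iota> X"
    using topspace_markov_topology[OF G \<iota>] by (simp add: discrete_topology_unique)
  then show ?thesis ..
qed

lemma continuous_map_markov_topology_power:
  assumes G: "group G" and \<iota>: "\<iota> ` topspace X \<subseteq> carrier G" and p: "p \<in> topspace X"
  shows "continuous_map X (markov_topology G \<iota> X) (\<lambda>y. (\<iota> y \<otimes>\<^bsub>G\<^esub> inv\<^bsub>G\<^esub> \<iota> p) [^]\<^bsub>G\<^esub> (n::nat))"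
proof (rule continuous_map_into_markov_topology[OF G \<iota>])
  fix T assume T: "group_topology G T" "continuous_map X T \<iota>"
  then have "continuous_map X T (\<lambda>y. \<iota> p)" using p by (auto simp: continuous_map_def)
  with T show "continuous_map X T (\<lambda>y. (\<iota> y \<otimes>\<^bsub>G\<^esub> inv\<^bsub>G\<^esub> \<iota> p) [^]\<^bsub>G\<^esub> n)"
    by (intro continuous_map_group_pow[OF G] continuous_map_group_mult continuous_map_group_inv)
qed

lemma countable_fan_tightnessD:
  fixes A :: "nat \<Rightarrow> 'a set"
  assumes "countable_fan_tightness T" "x \<in> topspace T"
    and "\<And>n. A n \<subseteq> topspace T" "\<And>n. x \<in> T closure_of A n"
  obtains B where "\<And>n. finite (B n)" "\<And>n. B n \<subseteq> A n" "x \<in> T closure_of (\<Union>n. B n)"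
proof -
  have "\<exists>B. (\<forall>n. finite (B n) \<and> B n \<subseteq> A n) \<and> x \<in> T closure_of (\<Union>n. B n)"
    using assms(1)[unfolded countable_fan_tightness_def, rule_format, of x A] assms(2-4) by blast
  then show ?thesis using that by blast
qed

lemma countable_fan_tightness_discrete_topology: "countable_fan_tightness (discrete_topology S)"
  unfolding countable_fan_tightness_def discrete_topology_closure_of
proof (intro allI impI)
  fix x A assume "x \<in> topspace (discrete_topology S) \<and>
    (\<forall>n::nat. A n \<subseteq> topspace (discrete_topology S) \<and> x \<in> S \<inter> A n)"
  then show "\<exists>B. (\<forall>n. finite (B n) \<and> B n \<subseteq> A n) \<and> x \<in> S \<inter> (\<Union>n. B n)"
    by (intro exI[of _ "\<lambda>_. {x}"]) auto
qed

section \<open>Separating a point from countably many closed sets\<close>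

lemma halves_series_bounds:
  fixes g :: "nat \<Rightarrow> real"
  assumes "\<And>k. 0 \<le> g k \<and> g k \<le> 1"
  shows summable_halves_series: "summable (\<lambda>k. g k * (1/2)^Suc k)"
    and halves_series_tail_le:
      "\<bar>(suminf (\<lambda>k. g k * (1/2)^Suc k)) - (\<Sum>k<N. g k * (1/2)^Suc k)\<bar> \<le> (1/2)^N"
proof -
  have geo: "summable (\<lambda>k. (1/2::real)^Suc k)"
    using summable_geometric[of "1/2::real"] by (simp add: summable_mult)
  show sm: "summable (\<lambda>k. g k * (1/2)^Suc k)"
    by (rule summable_comparison_test[OF _ geo])
       (use assms in \<open>auto intro!: exI[of _ 0] mult_le_one\<close>)
  have tail: "(suminf (\<lambda>k. g k * (1/2)^Suc k)) - (\<Sum>k<N. g k * (1/2)^Suc k) =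
      (suminf (\<lambda>k. g (k + N) * (1/2)^Suc (k + N)))"
    using suminf_split_initial_segment[OF sm, of N] by simp
  have sm_tail: "summable (\<lambda>k. g (k + N) * (1/2)^Suc (k + N))"
    using sm summable_iff_shift[of "\<lambda>k. g k * (1/2::real)^Suc k" N] by auto
  have geo_tail: "summable (\<lambda>k. (1/2::real)^Suc (k + N))"
    using geo by (simp add: summable_iff_shift)
  have "(suminf (\<lambda>k. g (k + N) * (1/2)^Suc (k + N))) \<le> (suminf (\<lambda>k. (1/2::real)^Suc (k + N)))"
    by (rule suminf_le[OF _ sm_tail geo_tail]) (use assms in \<open>auto intro: mult_le_one\<close>)
  also have "\<dots> = (suminf (\<lambda>k. (1/2)^Suc N * (1/2::real)^k))"
    by (simp add: power_add mult_ac)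
  also have "\<dots> = (1/2)^Suc N * (suminf (\<lambda>k. (1/2::real)^k))"
    by (rule suminf_mult) (rule summable_geometric, simp)
  also have "\<dots> = (1/2)^N"
    using suminf_geometric[of "1/2::real"] by simp
  finally have "(suminf (\<lambda>k. g (k + N) * (1/2)^Suc (k + N))) \<le> (1/2)^N" .
  moreover have "0 \<le> (suminf (\<lambda>k. g (k + N) * (1/2)^Suc (k + N)))"
    by (rule suminf_nonneg[OF sm_tail]) (use assms in auto)
  ultimately show "\<bar>(suminf (\<lambda>k. g k * (1/2)^Suc k)) - (\<Sum>k<N. g k * (1/2)^Suc k)\<bar> \<le> (1/2)^N"
    using tail by simp
qed

lemma continuous_map_halves_series:
  assumes cont: "\<And>k. continuous_map X euclideanreal (g k)"
    and bounds: "\<And>k y. y \<in> topspace X \<Longrightarrow> 0 \<le> g k y \<and> g k y \<le> 1"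
  shows "continuous_map X euclideanreal (\<lambda>y. suminf (\<lambda>k. g k y * (1/2)^Suc k))"
proof -
  have "continuous_map X Met_TC.mtopology (\<lambda>y. suminf (\<lambda>k. g k y * (1/2)^Suc k))"
  proof (rule Met_TC.continuous_map_uniform_limit
      [where F=sequentially and f="\<lambda>N y. \<Sum>k<N. g k y * (1/2)^Suc k"])
    show "\<forall>\<^sub>F N in sequentially. continuous_map X Met_TC.mtopology (\<lambda>y. \<Sum>k<N. g k y * (1/2)^Suc k)"
      unfolding mtopology_is_euclidean using cont
      by (intro always_eventually allI continuous_map_sum finite_lessThan continuous_map_real_mult
          continuous_map_canonical_const) simp_all
    show "\<forall>\<^sub>F N in sequentially. \<forall>y\<in>topspace X. (suminf (\<lambda>k. g k y * (1/2)^Suc k)) \<in> UNIV \<and>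
            dist (\<Sum>k<N. g k y * (1/2)^Suc k) (suminf (\<lambda>k. g k y * (1/2)^Suc k)) < e"
      if "0 < e" for e :: real
    proof -
      obtain N0 where N0: "(1/2::real)^N0 < e"
        using real_arch_pow_inv[of e "1/2::real"] \<open>0 < e\<close> by auto
      show ?thesis
      proof (rule eventually_sequentiallyI[of N0], intro ballI conjI)
        fix N y assume "N0 \<le> N" "y \<in> topspace X"
        have "\<bar>(suminf (\<lambda>k. g k y * (1/2)^Suc k)) - (\<Sum>k<N. g k y * (1/2)^Suc k)\<bar> \<le> (1/2)^N"
          by (rule halves_series_tail_le) (use bounds \<open>y \<in> topspace X\<close> in auto)
        also have "(1/2::real)^N \<le> (1/2)^N0" using \<open>N0 \<le> N\<close> by (simp add: power_decreasing)
        finally show "dist (\<Sum>k<N. g k y * (1/2)^Suc k) (suminf (\<lambda>k. g k y * (1/2)^Suc k)) < e"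
          using N0 by (simp add: dist_real_def abs_minus_commute)
      qed simp
    qed
  qed simp
  then show ?thesis by simp
qed

lemma completely_regular_space_separation_series:
  assumes X: "completely_regular_space X" and p: "p \<in> topspace X"
    and F: "\<And>n. closedin X (F n)" "\<And>n. p \<notin> F n"
  obtains f where "continuous_map X euclideanreal f" "f p = 0"
    "\<And>n y. y \<in> F n \<Longrightarrow> (1/2)^Suc n \<le> f y"
proof -
  have "\<exists>g. \<forall>n. continuous_map X (top_of_set {0..1::real}) (g n) \<and> g n p = 0 \<and> g n ` F n \<subseteq> {1}"
  proof (rule choice, rule allI)
    fix n
    have "closedin X (F n)" "p \<in> topspace X - F n" using F p by auto
    with X show "\<exists>g. continuous_map X (top_of_set {0..1::real}) g \<and> g p = 0 \<and> g ` F n \<subseteq> {1}"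
      unfolding completely_regular_space_def by blast
  qed
  then obtain g where g: "\<And>n. continuous_map X (top_of_set {0..1::real}) (g n)"
    "\<And>n. g n p = 0" "\<And>n. g n ` F n \<subseteq> {1}"
    by blast
  have g_cont: "continuous_map X euclideanreal (g n)" for n
    using g(1)[of n] continuous_map_into_fulltopology by blast
  have g_bounds: "0 \<le> g n y \<and> g n y \<le> 1" if "y \<in> topspace X" for n y
    using g(1)[of n] that by (auto simp: continuous_map_def)
  show ?thesis
  proof (rule that)
    show "continuous_map X euclideanreal (\<lambda>y. suminf (\<lambda>k. g k y * (1/2)^Suc k))"
      by (rule continuous_map_halves_series[OF g_cont g_bounds])
    show "suminf (\<lambda>k. g k p * (1/2)^Suc k) = 0" using g(2) by simp
    fix n y assume "y \<in> F n"
    then have y: "y \<in> topspace X" "g n y = 1"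
      using closedin_subset[OF F(1)] g(3)[of n] by auto
    have "(1/2)^Suc n = (\<Sum>k\<in>{n}. g k y * (1/2::real)^Suc k)" using y by simp
    also have "\<dots> \<le> suminf (\<lambda>k. g k y * (1/2)^Suc k)"
      by (rule sum_le_suminf[OF summable_halves_series]) (use g_bounds y in auto)
    finally show "(1/2)^Suc n \<le> suminf (\<lambda>k. g k y * (1/2)^Suc k)" .
  qed
qed

section \<open>Fan-tightness of the Markov topology\<close>

lemma markov_topology_one_notin_closure_powers:
  fixes X :: "'a topology" and F :: "nat \<Rightarrow> 'a set"
  assumes G: "group G" and \<iota>: "\<iota> ` topspace X \<subseteq> carrier G" and X: "tychonoff_space X"
    and lift: "\<And>f. \<exists>\<phi>. real_hom G \<phi> \<and> (\<forall>y\<in>topspace X. \<phi> (\<iota> y) = f y)"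
    and p: "p \<in> topspace X" and F: "\<And>n. finite (F n)" "\<And>n. F n \<subseteq> topspace X - {p}"
  shows "\<one>\<^bsub>G\<^esub> \<notin> markov_topology G \<iota> X closure_of
           (\<Union>n. (\<lambda>y. (\<iota> y \<otimes>\<^bsub>G\<^esub> inv\<^bsub>G\<^esub> \<iota> p) [^]\<^bsub>G\<^esub> ((2::nat) ^ Suc n)) ` F n)"
    (is "_ \<notin> ?M closure_of ?B")
proof
  assume one_in_closure: "\<one>\<^bsub>G\<^esub> \<in> ?M closure_of ?B"
  have F_closed: "closedin X (F n)" and p_notin_F: "p \<notin> F n" for n
    using X F(1,2)[of n] by (auto simp: tychonoff_space_def t1_space_closedin_finite)
  moreover have "completely_regular_space X" using X by (simp add: tychonoff_space_def)
  ultimately obtain f where f: "continuous_map X euclideanreal f" "f p = 0"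
    "\<And>n y. y \<in> F n \<Longrightarrow> (1/2)^Suc n \<le> f y"
    using completely_regular_space_separation_series[OF _ p] by metis
  obtain \<phi> where \<phi>: "real_hom G \<phi>" "\<And>y. y \<in> topspace X \<Longrightarrow> \<phi> (\<iota> y) = f y"
    using lift by blast
  have "continuous_map X euclideanreal (\<phi> \<circ> \<iota>)"
    by (rule continuous_map_eq[OF f(1)]) (use \<phi>(2) in auto)
  then have \<phi>_cont: "continuous_map ?M euclideanreal \<phi>"
    by (rule continuous_map_markov_topology_real_hom[OF G \<iota> \<phi>(1)])
  have \<phi>_large: "1 \<le> \<phi> z" if z: "z \<in> ?B" for z
  proof -
    obtain n y where y: "y \<in> F n" "z = (\<iota> y \<otimes>\<^bsub>G\<^esub> inv\<^bsub>G\<^esub> \<iota> p) [^]\<^bsub>G\<^esub> ((2::nat) ^ Suc n)"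
      using z by blast
    have y_X: "y \<in> topspace X" using y(1) F(2) by blast
    then have "\<iota> y \<in> carrier G" "\<iota> p \<in> carrier G" using \<iota> p by auto
    then have "\<phi> z = real (2 ^ Suc n) * (\<phi> (\<iota> y) - \<phi> (\<iota> p))"
      unfolding y(2) by (rule group.real_hom_pow_div[OF G \<phi>(1)])
    also have "\<dots> = 2 ^ Suc n * f y"
      using \<phi>(2) y_X p f(2) by simp
    also have "\<dots> \<ge> 2 ^ Suc n * (1/2) ^ Suc n"
      using f(3)[OF y(1)] by (intro mult_left_mono) auto
    finally show ?thesis by (simp add: power_mult_distrib[symmetric])
  qed
  define U where "U = {z \<in> topspace ?M. \<phi> z \<in> {-1<..<1}}"
  have "openin ?M U"
    unfolding U_def by (rule openin_continuous_map_preimage[OF \<phi>_cont]) simp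
  moreover have "\<one>\<^bsub>G\<^esub> \<in> U"
    using group.real_hom_one[OF G \<phi>(1)] topspace_markov_topology[OF G \<iota>]
      monoid.one_closed[OF group.is_monoid[OF G]] by (simp add: U_def)
  ultimately obtain z where "z \<in> ?B" "z \<in> U"
    using one_in_closure unfolding in_closure_of by blast
  with \<phi>_large show False by (force simp: U_def)
qed

lemma not_countable_fan_tightness_markov_topology:
  fixes X :: "'a topology"
  assumes G: "group G" and \<iota>: "\<iota> ` topspace X \<subseteq> carrier G" and X: "tychonoff_space X"
    and lift: "\<And>f. \<exists>\<phi>. real_hom G \<phi> \<and> (\<forall>y\<in>topspace X. \<phi> (\<iota> y) = f y)"
    and not_discrete: "X \<noteq> discrete_topology (topspace X)"
  shows "\<not> countable_fan_tightness (markov_topology G \<iota> X)"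
proof
  assume fan_tight: "countable_fan_tightness (markov_topology G \<iota> X)"
  define M where "M = markov_topology G \<iota> X"
  obtain p where p: "p \<in> topspace X" "\<not> openin X {p}"
    using not_discrete discrete_topology_unique[of "topspace X" X] by auto
  have "p \<notin> X interior_of {p}"
    using p(2) interior_of_subset[of X "{p}"] interior_of_eq[of X "{p}"] by auto
  then have p_limit: "p \<in> X closure_of (topspace X - {p})"
    using p(1) by (simp add: closure_of_complement)
  define h where "h n y = (\<iota> y \<otimes>\<^bsub>G\<^esub> inv\<^bsub>G\<^esub> \<iota> p) [^]\<^bsub>G\<^esub> ((2::nat) ^ Suc n)" for n y
  define A where "A n = h n ` (topspace X - {p})" for n
  have h_cont: "continuous_map X M (h n)" for n
    unfolding M_def h_def by (rule continuous_map_markov_topology_power[OF G \<iota> p(1)])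
  have "\<iota> p \<in> carrier G" using \<iota> p(1) by blast
  then have "h n p = \<one>\<^bsub>G\<^esub>" for n
    by (simp add: h_def group.r_inv[OF G] monoid.nat_pow_one[OF group.is_monoid[OF G]])
  then have A_closure: "\<one>\<^bsub>G\<^esub> \<in> M closure_of A n" for n
    using continuous_map_image_closure_subset[OF h_cont[of n], of "topspace X - {p}"] p_limit
    unfolding A_def by (metis image_eqI subsetD)
  have A_sub: "A n \<subseteq> topspace M" for n
    using h_cont[of n] by (auto simp: continuous_map_def A_def)
  have one_M: "\<one>\<^bsub>G\<^esub> \<in> topspace M"
    using topspace_markov_topology[OF G \<iota>] monoid.one_closed[OF group.is_monoid[OF G]]
    by (simp add: M_def)
  obtain B where B: "\<And>n. finite (B n)" "\<And>n. B n \<subseteq> A n"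
    and one_in_closure: "\<one>\<^bsub>G\<^esub> \<in> M closure_of (\<Union>n. B n)"
    using countable_fan_tightnessD[where A=A, OF fan_tight[folded M_def] one_M A_sub A_closure]
    by blast
  have "\<exists>F. \<forall>n. F n \<subseteq> topspace X - {p} \<and> finite (F n) \<and> B n = h n ` F n"
  proof (rule choice, rule allI)
    fix n
    show "\<exists>F. F \<subseteq> topspace X - {p} \<and> finite F \<and> B n = h n ` F"
      using finite_subset_image[OF B(1)[of n] B(2)[of n, unfolded A_def]] by blast
  qed
  then obtain F where F: "\<And>n. F n \<subseteq> topspace X - {p}" "\<And>n. finite (F n)"
    "\<And>n. B n = h n ` F n"
    by blast
  show False
    using markov_topology_one_notin_closure_powers[OF G \<iota> X lift p(1) F(2,1)] one_in_closure
    by (simp add: M_def h_def F(3))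
qed

lemma countable_fan_tightness_markov_topology_iff_discrete:
  fixes X :: "'a topology"
  assumes G: "group G" and \<iota>: "\<iota> ` topspace X \<subseteq> carrier G" and X: "tychonoff_space X"
    and lift: "\<And>f. \<exists>\<phi>. real_hom G \<phi> \<and> (\<forall>y\<in>topspace X. \<phi> (\<iota> y) = f y)"
  shows "countable_fan_tightness (markov_topology G \<iota> X) \<longleftrightarrow> X = discrete_topology (topspace X)"
proof
  show "X = discrete_topology (topspace X)" if "countable_fan_tightness (markov_topology G \<iota> X)"
    using not_countable_fan_tightness_markov_topology[OF assms] that by blast
  show "countable_fan_tightness (markov_topology G \<iota> X)" if "X = discrete_topology (topspace X)"
    using markov_topology_discrete[OF G \<iota> that] countable_fan_tightness_discrete_topology by simp
qed

theorem theorem3p8: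
  fixes X :: "'a topology"
  assumes "tychonoff_space X"
  shows "(countable_fan_tightness (F_top X) \<longleftrightarrow> X = discrete_topology (topspace X))
       \<and> (countable_fan_tightness (A_top X) \<longleftrightarrow> X = discrete_topology (topspace X))"
proof
  show "countable_fan_tightness (F_top X) \<longleftrightarrow> X = discrete_topology (topspace X)"
    unfolding F_top_def
  proof (rule countable_fan_tightness_markov_topology_iff_discrete[OF group_free_group _ assms])
    show "fg_insert ` topspace X \<subseteq> carrier (free_group (topspace X))"
      by (auto simp: free_group_def fg_insert_def)
    show "\<exists>\<phi>. real_hom (free_group (topspace X)) \<phi> \<and> (\<forall>y\<in>topspace X. \<phi> (fg_insert y) = f y)" for f
      by (intro exI[of _ "fg_lift f"]) (simp add: real_hom_fg_lift fg_lift_fg_insert)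
  qed
  show "countable_fan_tightness (A_top X) \<longleftrightarrow> X = discrete_topology (topspace X)"
    unfolding A_top_def
  proof (rule countable_fan_tightness_markov_topology_iff_discrete[OF _ _ assms])
    show "group (free_Abelian_group (topspace X))" by simp
    show "fa_insert ` topspace X \<subseteq> carrier (free_Abelian_group (topspace X))"
      by (auto simp: fa_insert_def)
    show "\<exists>\<phi>. real_hom (free_Abelian_group (topspace X)) \<phi> \<and> (\<forall>y\<in>topspace X. \<phi> (fa_insert y) = f y)" for f
      by (intro exI[of _ "fa_lift f"]) (simp add: real_hom_fa_lift fa_lift_fa_insert)
  qed
qed

end
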